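(* Let $H$ be a Hilbert space and $L:H\to[0,\infty)$ of class $C^2$, and assume that for some $c>0$, $$|\nabla L(x)|\ge c\,\frac{\sqrt{L(x)}}{1+|x|}\quad\text{for all }x\in H.$$ Let $(x_t)_{t\ge0}$ solve $\dot x(t)=-\nabla L(x(t))$ with $x(0)=0$. Then there exists $x_\infty\in H$ with $|x_\infty|\le e^{\frac2c\sqrt{L(0)}}-1$, $L(x_\infty)=0$ and $\lim_{t\to\infty}x(t)=x_\infty$. *)

theory Defs
  imports "HOL-Analysis.Analysis"
begin

end

theory Submission
  imports Defs
begin

text \<open>Along the flow the energy \<open>L (x t)\<close> decreases with derivative \<open>-\<bar>\<nabla>L\<bar>\<^sup>2\<close>, and
  \<open>\<bar>x t\<bar>\<close> is bounded by the arclength \<open>s t = \<integral>\<^sub>0\<^sup>t \<bar>\<nabla>L (x \<tau>)\<bar> d\<tau>\<close>. While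
  \<open>L (x t) > 0\<close>, the hypothesis gives \<open>\<bar>\<nabla>L (x t)\<bar> \<ge> c \<surd>L (x t) / (1 + s t)\<close>, which makes
  the Lyapunov function \<open>\<surd>L (x t) + c/2 ln (1 + s t)\<close> nonincreasing; hence \<open>s\<close> stays below
  \<open>exp (2/c \<surd>L 0) - 1\<close>, and once \<open>L\<close> vanishes on the flow the flow stops. Finite
  arclength makes \<open>x\<close> Cauchy at infinity, and the limit is a zero of \<open>L\<close>: otherwise
  \<open>\<bar>\<nabla>L (x t)\<bar>\<close> would stay bounded away from \<open>0\<close> and the arclength would be infinite.\<close>

lemma gradient_eq_0_at_minimum:
  fixes f :: "'a::real_inner \<Rightarrow> real"
  assumes "(f has_derivative (\<lambda>h. g \<bullet> h)) (at y)" and "\<And>z. f y \<le> f z"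
  shows "g = 0"
proof -
  have "(\<lambda>h. g \<bullet> h) = (\<lambda>h. 0)"
    using has_derivative_local_min[OF assms(1)] assms(2) by auto
  then have "g \<bullet> g = 0" by metis
  then show ?thesis by simp
qed

lemma has_real_derivative_gradient_comp:
  fixes f :: "'a::real_inner \<Rightarrow> real"
  assumes "(x has_vector_derivative v) (at t)"
    and "(f has_derivative (\<lambda>h. g \<bullet> h)) (at (x t))"
  shows "((\<lambda>t. f (x t)) has_real_derivative g \<bullet> v) (at t)"
proof -
  have "((f \<circ> x) has_derivative (\<lambda>h. g \<bullet> (h *\<^sub>R v))) (at t)"
    using diff_chain_at[OF assms(1)[unfolded has_vector_derivative_def] assms(2)]
    by (simp add: o_def)
  then show ?thesis
    by (simp add: has_field_derivative_def o_def mult_commute_abs)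
qed

lemma norm_increment_le_increment:
  fixes f :: "real \<Rightarrow> 'a::real_inner" and s :: "real \<Rightarrow> real"
  assumes "a \<le> b" and "continuous_on {a..b} f" and "continuous_on {a..b} s"
    and "\<And>t. a < t \<Longrightarrow> t < b \<Longrightarrow> (f has_vector_derivative f' t) (at t)"
    and "\<And>t. a < t \<Longrightarrow> t < b \<Longrightarrow> (s has_real_derivative s' t) (at t)"
    and "\<And>t. a < t \<Longrightarrow> t < b \<Longrightarrow> norm (f' t) \<le> s' t"
  shows "norm (f b - f a) \<le> s b - s a"
proof -
  \<comment> \<open>Testing against the fixed direction \<open>u\<close> reduces the claim to scalar monotonicity.\<close>
  define u where "u = f b - f a"
  have "s a \<le> s b"
  proof (rule DERIV_nonneg_imp_increasing_open[OF assms(1) _ assms(3)])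
    fix t assume t: "a < t" "t < b"
    show "\<exists>y. (s has_real_derivative y) (at t) \<and> 0 \<le> y"
      using assms(5)[OF t] order_trans[OF norm_ge_zero assms(6)[OF t]] by blast
  qed
  moreover have "u \<bullet> f b - norm u * s b \<le> u \<bullet> f a - norm u * s a"
  proof (rule DERIV_nonpos_imp_decreasing_open[OF assms(1)])
    show "continuous_on {a..b} (\<lambda>t. u \<bullet> f t - norm u * s t)"
      by (intro continuous_intros assms(2,3))
    fix t assume t: "a < t" "t < b"
    have "((\<lambda>t. u \<bullet> f t) has_real_derivative u \<bullet> f' t) (at t)"
      by (rule has_real_derivative_gradient_comp[OF assms(4)[OF t]])
        (rule bounded_linear.has_derivative[OF bounded_linear_inner_right has_derivative_ident])
    then have "((\<lambda>t. u \<bullet> f t - norm u * s t) has_real_derivative u \<bullet> f' t - norm u * s' t) (at t)"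
      by (intro DERIV_diff DERIV_cmult assms(5)[OF t])
    moreover have "u \<bullet> f' t \<le> norm u * s' t"
      using order_trans[OF norm_cauchy_schwarz mult_left_mono[OF assms(6)[OF t] norm_ge_zero]] .
    ultimately show "\<exists>y. ((\<lambda>t. u \<bullet> f t - norm u * s t) has_real_derivative y) (at t) \<and> y \<le> 0"
      by auto
  qed
  moreover have "norm u * norm u = u \<bullet> f b - u \<bullet> f a"
    using power2_norm_eq_inner[of u] by (simp add: u_def power2_eq_square inner_diff_right)
  ultimately have "norm u * norm u \<le> norm u * (s b - s a)"
    by (simp add: right_diff_distrib)
  then have "norm u \<le> s b - s a"
    using \<open>s a \<le> s b\<close> by (cases "norm u = 0") (auto dest: mult_left_le_imp_le)
  then show ?thesis
    by (simp add: u_def)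
qed

lemma convergent_at_top_if_dist_le_bounded_increment:
  fixes f :: "real \<Rightarrow> 'a::{metric_space,complete_space}"
  assumes dist_le: "\<And>a b. 0 \<le> a \<Longrightarrow> a \<le> b \<Longrightarrow> dist (f a) (f b) \<le> s b - s a"
    and bounded: "\<And>t. 0 \<le> t \<Longrightarrow> s t \<le> B"
  shows "\<exists>l. (f \<longlongrightarrow> l) at_top"
proof -
  define S where "S = Sup (s ` {0..})"
  have "bdd_above (s ` {0..})"
    using bounded by (auto intro: bdd_aboveI[of _ B])
  then have s_le_S: "s t \<le> S" if "0 \<le> t" for t
    unfolding S_def by (rule cSup_upper[rotated]) (use that in auto)
  have "cauchy_filter (filtermap f at_top)"
    unfolding cauchy_filter_metric_filtermap
  proof (intro allI impI)
    fix e :: real assume "e > 0"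
    have "S - e < Sup (s ` {0..})"
      using \<open>e > 0\<close> by (simp add: S_def)
    then obtain T where T: "0 \<le> T" "S - e < s T"
      using less_cSupE[of "S - e" "s ` {0..}"] by auto
    have "dist (f p) (f q) < e" if "T \<le> p" "p \<le> q" for p q
    proof -
      have "dist (f p) (f q) \<le> s q - s p" using dist_le that T by auto
      also have "\<dots> \<le> S - s T"
        using s_le_S[of q] dist_le[of T p] zero_le_dist[of "f T" "f p"] that T by linarith
      finally show ?thesis using T by simp
    qed
    then have "dist (f p) (f q) < e" if "T \<le> p" "T \<le> q" for p q
      using that by (metis dist_commute linorder_le_cases)
    then show "\<exists>P. eventually P at_top \<and> (\<forall>p q. P p \<and> P q \<longrightarrow> dist (f p) (f q) < e)"
      by (intro exI[of _ "\<lambda>p. T \<le> p"]) (auto simp: eventually_at_top_linorder)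
  qed
  then obtain l where "filtermap f at_top \<le> nhds l"
    using cauchy_filter_complete_converges[OF _ complete_UNIV, of "filtermap f at_top"]
    by (auto simp: filtermap_bot_iff)
  then show ?thesis by (auto simp: filterlim_def)
qed

lemma continuous_on_first_zero:
  fixes g :: "real \<Rightarrow> real"
  assumes "continuous_on {a..b} g" and "t\<^sub>1 \<in> {a..b}" and "g t\<^sub>1 = 0"
  obtains t\<^sub>0 where "t\<^sub>0 \<in> {a..b}" "g t\<^sub>0 = 0" "\<And>t. a \<le> t \<Longrightarrow> t < t\<^sub>0 \<Longrightarrow> g t \<noteq> 0"
proof -
  define Z where "Z = {t \<in> {a..b}. g t = 0}"
  have "closed Z"
    unfolding Z_def by (rule continuous_closed_preimage_constant[OF assms(1) closed_atLeastAtMost])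
  moreover have "Z \<noteq> {}" "bdd_below Z"
    using assms(2,3) by (auto simp: Z_def intro: bdd_belowI[of _ a])
  ultimately have "Inf Z \<in> Z"
    by (rule closed_contains_Inf[rotated 2])
  moreover have "g t \<noteq> 0" if "a \<le> t" "t < Inf Z" for t
  proof
    assume "g t = 0"
    with that \<open>Inf Z \<in> Z\<close> have "t \<in> Z"
      by (auto simp: Z_def)
    then show False
      using cInf_lower[OF _ \<open>bdd_below Z\<close>] that(2) by fastforce
  qed
  ultimately show ?thesis
    using that by (auto simp: Z_def)
qed

locale gradient_flow =
  fixes L :: "'a::{real_inner,complete_space} \<Rightarrow> real"
    and gradL :: "'a \<Rightarrow> 'a"
    and x :: "real \<Rightarrow> 'a"
  assumes has_derivative_L: "\<And>y. (L has_derivative (\<lambda>h. gradL y \<bullet> h)) (at y)"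
    and continuous_on_gradL: "continuous_on UNIV gradL"
    and flow: "\<And>t. 0 \<le> t \<Longrightarrow> (x has_vector_derivative - gradL (x t)) (at t within {0..})"
begin

definition speed :: "real \<Rightarrow> real"
  where "speed t = norm (gradL (x t))"

definition arclength :: "real \<Rightarrow> real"
  where "arclength t = integral {0..t} speed"

lemma flow_has_vector_derivative: "0 < t \<Longrightarrow> (x has_vector_derivative - gradL (x t)) (at t)"
  using flow[of t] at_within_interior[of t "{0..}"] by simp

lemma continuous_on_flow: "continuous_on {0..} x"
  unfolding continuous_on_eq_continuous_within
  using has_vector_derivative_continuous[OF flow] by auto

lemma continuous_on_L: "continuous_on UNIV L"
  using has_derivative_L has_derivative_continuous continuous_at_imp_continuous_on by blast

lemma continuous_on_energy: "continuous_on {0..} (\<lambda>t. L (x t))"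
  using continuous_on_compose2[OF continuous_on_L continuous_on_flow] by blast

lemma energy_has_derivative:
  "0 < t \<Longrightarrow> ((\<lambda>t. L (x t)) has_real_derivative - (speed t)\<^sup>2) (at t)"
  using has_real_derivative_gradient_comp[OF flow_has_vector_derivative has_derivative_L]
  by (simp add: speed_def power2_norm_eq_inner)

lemma energy_antimono:
  assumes "0 \<le> a" "a \<le> b"
  shows "L (x b) \<le> L (x a)"
proof (rule DERIV_nonpos_imp_decreasing_open[OF assms(2)])
  fix t assume "a < t" "t < b"
  then show "\<exists>y. ((\<lambda>t. L (x t)) has_real_derivative y) (at t) \<and> y \<le> 0"
    using energy_has_derivative[of t] assms(1) by auto
qed (use assms continuous_on_subset[OF continuous_on_energy] in auto)

lemma speed_nonneg: "0 \<le> speed t"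
  by (simp add: speed_def)

lemma continuous_on_speed: "continuous_on {0..} speed"
  unfolding speed_def
  by (intro continuous_on_norm continuous_on_compose2[OF continuous_on_gradL continuous_on_flow]) auto

lemma speed_integrable: "0 \<le> a \<Longrightarrow> speed integrable_on {a..b}"
  by (intro integrable_continuous_interval continuous_on_subset[OF continuous_on_speed]) auto

lemma arclength_diff:
  assumes "0 \<le> a" "a \<le> b"
  shows "arclength b - arclength a = integral {a..b} speed"
  using Henstock_Kurzweil_Integration.integral_combine[where a = 0 and c = a and b = b and f = speed]
    speed_integrable[of 0 b] assms
  by (simp add: arclength_def)

lemma arclength_0: "arclength 0 = 0"
  by (simp add: arclength_def)

lemma arclength_mono: "0 \<le> a \<Longrightarrow> a \<le> b \<Longrightarrow> arclength a \<le> arclength b"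
  using arclength_diff integral_nonneg[OF speed_integrable] speed_nonneg
  by (metis diff_ge_0_iff_ge)

lemma arclength_nonneg: "0 \<le> t \<Longrightarrow> 0 \<le> arclength t"
  using arclength_mono[of 0 t] by (simp add: arclength_0)

lemma continuous_on_arclength: "continuous_on {0..T} arclength"
  unfolding arclength_def using indefinite_integral_continuous_1[OF speed_integrable] by simp

lemma arclength_has_derivative:
  assumes "0 < t"
  shows "(arclength has_real_derivative speed t) (at t)"
proof -
  have "(arclength has_real_derivative speed t) (at t within {0..t+1})"
    unfolding arclength_def using assms
    by (intro integral_has_real_derivative continuous_on_subset[OF continuous_on_speed]) auto
  moreover have "at t within {0..t+1} = at t"
    by (rule at_within_interior) (use assms in auto)
  ultimately show ?thesis by simp
qed

lemma flow_increment_le_arclength: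
  assumes "0 \<le> a" "a \<le> b"
  shows "norm (x b - x a) \<le> arclength b - arclength a"
proof (rule norm_increment_le_increment[where f' = "\<lambda>t. - gradL (x t)" and s' = speed])
  show "continuous_on {a..b} x"
    using assms by (intro continuous_on_subset[OF continuous_on_flow]) auto
  show "continuous_on {a..b} arclength"
    using assms by (intro continuous_on_subset[OF continuous_on_arclength]) auto
qed (use assms flow_has_vector_derivative arclength_has_derivative in \<open>auto simp: speed_def\<close>)

lemma flow_convergent_if_arclength_bounded:
  assumes "\<And>t. 0 \<le> t \<Longrightarrow> arclength t \<le> B"
  shows "\<exists>\<xi>. (x \<longlongrightarrow> \<xi>) at_top"
proof (rule convergent_at_top_if_dist_le_bounded_increment[where s = arclength])
  show "dist (x a) (x b) \<le> arclength b - arclength a" if "0 \<le> a" "a \<le> b" for a b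
    using flow_increment_le_arclength[OF that] by (simp add: dist_norm norm_minus_commute)
qed (rule assms)

end

locale lojasiewicz_gradient_flow = gradient_flow +
  fixes c :: real
  assumes L_nonneg: "\<And>y. 0 \<le> L y"
    and c_pos: "0 < c"
    and lojasiewicz: "\<And>y. c * sqrt (L y) / (1 + norm y) \<le> norm (gradL y)"
    and flow_0: "x 0 = 0"
begin

lemma norm_flow_le_arclength: "0 \<le> t \<Longrightarrow> norm (x t) \<le> arclength t"
  using flow_increment_le_arclength[of 0 t] by (simp add: flow_0 arclength_0)

lemma lojasiewicz_arclength:
  assumes "0 \<le> t"
  shows "c * sqrt (L (x t)) / (1 + arclength t) \<le> speed t"
proof -
  have "0 < 1 + norm (x t)" "1 + norm (x t) \<le> 1 + arclength t"
    using norm_flow_le_arclength[OF assms] by (simp_all add: add_pos_nonneg)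
  then have "c * sqrt (L (x t)) / (1 + arclength t) \<le> c * sqrt (L (x t)) / (1 + norm (x t))"
    using c_pos L_nonneg[of "x t"] by (simp add: frac_le)
  also have "\<dots> \<le> speed t"
    unfolding speed_def by (rule lojasiewicz)
  finally show ?thesis .
qed

lemma speed_eq_0_after_energy_0:
  assumes "0 \<le> t\<^sub>0" "t\<^sub>0 \<le> t" "L (x t\<^sub>0) = 0"
  shows "speed t = 0"
proof -
  have "L (x t) = 0"
    using energy_antimono[OF assms(1,2)] assms(3) L_nonneg[of "x t"] by simp
  then have "gradL (x t) = 0"
    by (intro gradient_eq_0_at_minimum[OF has_derivative_L]) (simp add: L_nonneg)
  then show ?thesis
    by (simp add: speed_def)
qed

lemma lyapunov_antimono:
  assumes "0 \<le> T" and pos: "\<And>t. 0 \<le> t \<Longrightarrow> t < T \<Longrightarrow> 0 < L (x t)"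
  shows "sqrt (L (x T)) + c / 2 * ln (1 + arclength T) \<le> sqrt (L 0)"
proof -
  define V where "V t = sqrt (L (x t)) + c / 2 * ln (1 + arclength t)" for t
  have "V T \<le> V 0"
  proof (rule DERIV_nonpos_imp_decreasing_open[OF \<open>0 \<le> T\<close>])
    have "1 + arclength t \<noteq> 0" if "t \<in> {0..T}" for t
      using arclength_nonneg[of t] that by simp
    then show "continuous_on {0..T} V"
      unfolding V_def
      by (intro continuous_intros continuous_on_subset[OF continuous_on_energy] continuous_on_arclength)
        auto
    fix t assume t: "0 < t" "t < T"
    define q where "q = sqrt (L (x t))"
    define n where "n = speed t"
    define s where "s = arclength t"
    have "0 < L (x t)" "0 \<le> s"
      using pos arclength_nonneg t by (auto simp: s_def)
    then have "0 < q"
      by (simp add: q_def)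
    have "((\<lambda>t. sqrt (L (x t))) has_real_derivative inverse q / 2 * - n\<^sup>2) (at t)"
      unfolding q_def n_def
      by (rule DERIV_chain2[OF DERIV_real_sqrt[OF \<open>0 < L (x t)\<close>] energy_has_derivative[OF t(1)]])
    moreover have "((\<lambda>t. ln (1 + arclength t)) has_real_derivative n / (1 + s)) (at t)"
      using DERIV_chain2[OF DERIV_ln_divide DERIV_add[OF DERIV_const arclength_has_derivative[OF t(1)]]]
        \<open>0 \<le> s\<close>
      by (simp add: n_def s_def)
    ultimately have V_deriv:
      "(V has_real_derivative inverse q / 2 * - n\<^sup>2 + c / 2 * (n / (1 + s))) (at t)"
      unfolding V_def by (intro DERIV_add DERIV_cmult)
    have "c * q / (1 + s) \<le> n"
      using lojasiewicz_arclength[of t] t by (simp add: q_def n_def s_def)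
    then have "n * (c * q - n * (1 + s)) \<le> 0"
      using \<open>0 \<le> s\<close> speed_nonneg[of t]
      by (intro mult_nonneg_nonpos) (auto simp: n_def divide_le_eq mult.commute)
    moreover have "inverse q / 2 * - n\<^sup>2 + c / 2 * (n / (1 + s))
        = n * (c * q - n * (1 + s)) / (2 * q * (1 + s))"
      using \<open>0 < q\<close> \<open>0 \<le> s\<close>
      by (simp add: divide_simps power2_eq_square) (simp add: algebra_simps)
    ultimately have "inverse q / 2 * - n\<^sup>2 + c / 2 * (n / (1 + s)) \<le> 0"
      using \<open>0 < q\<close> \<open>0 \<le> s\<close> by (simp add: divide_nonpos_pos)
    with V_deriv show "\<exists>y. (V has_real_derivative y) (at t) \<and> y \<le> 0"
      by blast
  qed
  then show ?thesis
    by (simp add: V_def flow_0 arclength_0)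
qed

lemma arclength_le_while_energy_pos:
  assumes "0 \<le> T" and "\<And>t. 0 \<le> t \<Longrightarrow> t < T \<Longrightarrow> 0 < L (x t)"
  shows "arclength T \<le> exp (2 / c * sqrt (L 0)) - 1"
proof -
  have "c / 2 * ln (1 + arclength T) \<le> sqrt (L 0)"
    using lyapunov_antimono[OF assms] real_sqrt_ge_zero[OF L_nonneg[of "x T"]] by linarith
  then have "ln (1 + arclength T) \<le> 2 / c * sqrt (L 0)"
    using c_pos by (simp add: field_simps)
  then have "exp (ln (1 + arclength T)) \<le> exp (2 / c * sqrt (L 0))"
    by simp
  then show ?thesis
    using arclength_nonneg[OF assms(1)] by simp
qed

lemma arclength_le:
  assumes "0 \<le> T"
  shows "arclength T \<le> exp (2 / c * sqrt (L 0)) - 1"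
proof (cases "\<forall>t. 0 \<le> t \<and> t < T \<longrightarrow> 0 < L (x t)")
  case True
  then show ?thesis
    using arclength_le_while_energy_pos[OF assms] by blast
next
  case False
  then obtain t\<^sub>1 where t\<^sub>1: "0 \<le> t\<^sub>1" "t\<^sub>1 < T" "\<not> 0 < L (x t\<^sub>1)"
    by blast
  then have "t\<^sub>1 \<in> {0..T}" "L (x t\<^sub>1) = 0"
    using L_nonneg[of "x t\<^sub>1"] by auto
  moreover have "continuous_on {0..T} (\<lambda>t. L (x t))"
    by (rule continuous_on_subset[OF continuous_on_energy]) auto
  ultimately obtain t\<^sub>0 where t\<^sub>0: "t\<^sub>0 \<in> {0..T}" "L (x t\<^sub>0) = 0"
    and before: "\<And>t. 0 \<le> t \<Longrightarrow> t < t\<^sub>0 \<Longrightarrow> L (x t) \<noteq> 0"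
    using continuous_on_first_zero[where g = "\<lambda>t. L (x t)"] by blast
  have "arclength t\<^sub>0 \<le> exp (2 / c * sqrt (L 0)) - 1"
    by (rule arclength_le_while_energy_pos) (use t\<^sub>0(1) before L_nonneg in \<open>auto simp: order_le_less\<close>)
  moreover have "integral {t\<^sub>0..T} speed = integral {t\<^sub>0..T} (\<lambda>_. 0)"
    by (rule integral_cong) (use speed_eq_0_after_energy_0 t\<^sub>0 in auto)
  ultimately show ?thesis
    using arclength_diff[of t\<^sub>0 T] t\<^sub>0(1) by simp
qed

lemma flow_convergent: "\<exists>\<xi>. (x \<longlongrightarrow> \<xi>) at_top"
  using flow_convergent_if_arclength_bounded arclength_le by blast

lemma limit_norm_le:
  assumes "(x \<longlongrightarrow> \<xi>) at_top"
  shows "norm \<xi> \<le> exp (2 / c * sqrt (L 0)) - 1"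
proof (rule tendsto_upperbound[OF tendsto_norm[OF assms]])
  show "\<forall>\<^sub>F t in at_top. norm (x t) \<le> exp (2 / c * sqrt (L 0)) - 1"
    using eventually_ge_at_top[of 0]
    by eventually_elim (use norm_flow_le_arclength arclength_le in \<open>auto intro: order_trans\<close>)
qed simp

lemma limit_energy_eq_0:
  assumes lim: "(x \<longlongrightarrow> \<xi>) at_top"
  shows "L \<xi> = 0"
proof (rule ccontr)
  define B where "B = exp (2 / c * sqrt (L 0)) - 1"
  define d where "d = c * sqrt (L \<xi>) / (1 + B)"
  assume "L \<xi> \<noteq> 0"
  then have "0 < d"
    using L_nonneg[of \<xi>] c_pos arclength_le[of 0] arclength_0 by (simp add: d_def B_def)
  have energy_lim: "((\<lambda>t. L (x t)) \<longlongrightarrow> L \<xi>) at_top"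
    using continuous_on_tendsto_compose[OF continuous_on_L lim] by simp
  have energy_ge: "L \<xi> \<le> L (x t)" if "0 \<le> t" for t
  proof (rule tendsto_upperbound[OF energy_lim])
    show "\<forall>\<^sub>F s in at_top. L (x s) \<le> L (x t)"
      using eventually_ge_at_top[of t] by eventually_elim (use that energy_antimono in auto)
  qed simp
  have d_le_speed: "d \<le> speed t" if "0 \<le> t" for t
  proof -
    have "d \<le> c * sqrt (L (x t)) / (1 + arclength t)"
      unfolding d_def using that c_pos arclength_le[OF that] arclength_nonneg[OF that] L_nonneg
        energy_ge[OF that]
      by (intro frac_le mult_left_mono) (auto simp: B_def)
    also have "\<dots> \<le> speed t"
      by (rule lojasiewicz_arclength[OF that])
    finally show ?thesis .
  qed
  define T where "T = (B + 1) / d"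
  have "0 \<le> T"
    using \<open>0 < d\<close> arclength_le[of 0] arclength_0 by (simp add: T_def B_def)
  then have "integral {0..T} (\<lambda>_. d) \<le> arclength T"
    unfolding arclength_def using d_le_speed by (intro integral_le speed_integrable) auto
  then have "B + 1 \<le> arclength T"
    using \<open>0 < d\<close> \<open>0 \<le> T\<close> by (simp add: T_def)
  then show False
    using arclength_le[OF \<open>0 \<le> T\<close>] by (simp add: B_def)
qed

end

theorem corollary2p5:
  fixes L :: "'a::{real_inner,complete_space} \<Rightarrow> real"
    and gradL :: "'a \<Rightarrow> 'a"
    and D2L :: "'a \<Rightarrow> ('a \<Rightarrow>\<^sub>L 'a)"
    and x :: "real \<Rightarrow> 'a"
    and c :: real
  assumes L_nonneg: "\<And>y. L y \<ge> 0"
    and L_grad: "\<And>y. (L has_derivative (\<lambda>h. gradL y \<bullet> h)) (at y)"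
    and grad_diff: "\<And>y. (gradL has_derivative blinfun_apply (D2L y)) (at y)"
    and D2L_cont: "continuous_on UNIV D2L"
    and c_pos: "c > 0"
    and loj: "\<And>y. norm (gradL y) \<ge> c * sqrt (L y) / (1 + norm y)"
    and flow: "\<And>t. t \<ge> 0 \<Longrightarrow> (x has_vector_derivative - gradL (x t)) (at t within {0..})"
    and init: "x 0 = 0"
  shows "\<exists>x_inf. norm x_inf \<le> exp (2 / c * sqrt (L 0)) - 1 \<and> L x_inf = 0
                \<and> (x \<longlongrightarrow> x_inf) at_top"
proof -
  have "continuous_on UNIV gradL"
    using grad_diff has_derivative_continuous continuous_at_imp_continuous_on by blast
  then interpret lojasiewicz_gradient_flow L gradL x c
    using L_grad flow L_nonneg c_pos loj init by unfold_locales auto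
  obtain \<xi> where "(x \<longlongrightarrow> \<xi>) at_top"
    using flow_convergent by blast
  then show ?thesis
    using limit_norm_le limit_energy_eq_0 by blast
qed

end
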